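(* In the setting described in the context, the perimeter of $K$ satisfies $$\mathcal{P}=\int_{\partial K}\ell(\rho)^2\,\frac{d\omega}{ds}\,d\theta=\int_{\partial K}\kappa_g\,\ell(\rho)^2\,\frac{\ell(x)c(x)}{\ell(r)c(r)}\,d\theta=\int_{\partial K}\kappa_g\,\ell(\rho)^2\,\frac{1-k\,a(x)}{1-k\,a(r)}\,d\theta .$$
   Context: $M$ is $\mathbb{E}^2$, $\mathbb{S}^2$ or $\mathbb{H}^2$ of constant curvature $k$ ($k=0$, $k>0$, $k<0$). Functions: for $k>0$, $\ell(r)=\sin(\sqrt{k}r)/\sqrt{k}$, $a(r)=(1-\cos(\sqrt{k}r))/k$, $c(r)=\sqrt{k}\cot(\sqrt{k}r)$; for $k=0$, $\ell(r)=r$, $a(r)=r^2/2$, $c(r)=1/r$; for $k<0$, $\ell(r)=\sinh(\sqrt{-k}r)/\sqrt{-k}$, $a(r)=(1-\cosh(\sqrt{-k}r))/k$, $c(r)=\sqrt{-k}\coth(\sqrt{-k}r)$ (these make sense for negative $r$ too; $\ell(r)c(r)=1-ka(r)$). Setting: fix $O\in M$; $K\subset M$ is a compact convex set with nonempty interior and $C^2$ boundary (on $\mathbb{S}^2$, $K$ lies in the open hemisphere centered at $O$); $\partial K$ is oriented counterclockwise and parametrized by arclength $s$; $\kappa_g\ge0$ is its geodesic curvature. For $P=P(s)\in\partial K$ let $\lambda$ be the tangent geodesic (support line) of $K$ at $P$. For an angle $\omega$ let $\gamma_\omega$ be the unit-speed geodesic with $\gamma_\omega(0)=O$ and initial direction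 at angle $\omega$. Then $\omega=\omega(s)$ (chosen continuous in $s$) and $r=r(s)\in\mathbb{R}$ are determined by: $\lambda$ is perpendicular to $\gamma_\omega$ at $F=\gamma_\omega(r)$ and $K$ lies in the closed half-plane bounded by $\lambda$ containing $\gamma_\omega(t)$ for $t<r$. $x=x(s)$ is the signed distance along $\lambda$ from $F$ to $P$, positive iff $P$ lies on the ray from $F$ in the direction obtained by rotating $\gamma_\omega'(r)$ clockwise by $\pi/2$. Additionally $(\rho,\theta)$ are geodesic polar coordinates of $P$ about $O$; $\ell(\rho)^2\,d\theta$ is a smooth 1-form (extending across $O$), and the integrals are of 1-forms along $\partial K$. *)

theory Defs
  imports "HOL-Analysis.Analysis"
begin

text \<open>
  Uniform model of the space form M of constant curvature k (E^2, S^2, H^2):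
  M_k = {p in R^3. k (p1^2 + p2^2) + p3^2 = 1}, restricted to p3 > 0 when k <= 0
  (for k = 0 this is the plane p3 = 1; for k > 0 a sphere of radius 1/sqrt k in
  the coordinates (p1, p2, p3/sqrt k); for k < 0 the upper hyperboloid sheet).
  The Riemannian metric is induced by the constant form
  Bk v w = v1 w1 + v2 w2 + v3 w3 / k  (for k = 0 tangent vectors have v3 = 0 and
  the last term is 0, matching the HOL convention x / 0 = 0).
  The base point is O = (0,0,1); angles are measured in the frame
  (1,0,0), (0,1,0) of the tangent plane at O, whose orientation is the
  counterclockwise one.
\<close>

definition ell :: "real \<Rightarrow> real \<Rightarrow> real" where
  "ell k r = (if k > 0 then sin (sqrt k * r) / sqrt k
              else if k = 0 then r
              else sinh (sqrt (-k) * r) / sqrt (-k))"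

definition aa :: "real \<Rightarrow> real \<Rightarrow> real" where
  "aa k r = (if k > 0 then (1 - cos (sqrt k * r)) / k
             else if k = 0 then r\<^sup>2 / 2
             else (1 - cosh (sqrt (-k) * r)) / k)"

definition cc :: "real \<Rightarrow> real \<Rightarrow> real" where
  "cc k r = (if k > 0 then sqrt k * cot (sqrt k * r)
             else if k = 0 then 1 / r
             else sqrt (-k) * cosh (sqrt (-k) * r) / sinh (sqrt (-k) * r))"

definition Mk :: "real \<Rightarrow> (real^3) set" where
  "Mk k = {p. k * ((p$1)\<^sup>2 + (p$2)\<^sup>2) + (p$3)\<^sup>2 = 1 \<and> (k > 0 \<or> p$3 > 0)}"

definition Oo :: "real^3" where
  "Oo = vector [0, 0, 1]"

definition Bk :: "real \<Rightarrow> real^3 \<Rightarrow> real^3 \<Rightarrow> real" where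
  "Bk k v w = v$1 * w$1 + v$2 * w$2 + v$3 * w$3 / k"

text \<open>Counterclockwise rotation by pi/2 of a tangent vector v at p
  (for k > 0: the cross product with the outward unit normal).\<close>
definition Jk :: "real \<Rightarrow> real^3 \<Rightarrow> real^3 \<Rightarrow> real^3" where
  "Jk k p v = vector [p$2 * v$3 - p$3 * v$2, p$3 * v$1 - p$1 * v$3,
                      k * (p$1 * v$2 - p$2 * v$1)]"

text \<open>Unit-speed geodesic t |-> exp_p(t v) with initial point p and unit initial velocity v.\<close>
definition expm :: "real \<Rightarrow> real^3 \<Rightarrow> real^3 \<Rightarrow> real \<Rightarrow> real^3" where
  "expm k p v t = (1 - k * aa k t) *\<^sub>R p + ell k t *\<^sub>R v"

definition gamma_om :: "real \<Rightarrow> real \<Rightarrow> real \<Rightarrow> real^3" where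
  "gamma_om k w = expm k Oo (vector [cos w, sin w, 0])"

text \<open>Geodesic segment from p to q (p, q in M, in the open hemisphere if k > 0):
  central projection onto M of the chord; geodesic convexity.\<close>
definition nrm :: "real \<Rightarrow> real^3 \<Rightarrow> real^3" where
  "nrm k v = (1 / sqrt (k * ((v$1)\<^sup>2 + (v$2)\<^sup>2) + (v$3)\<^sup>2)) *\<^sub>R v"

definition gconvex :: "real \<Rightarrow> (real^3) set \<Rightarrow> bool" where
  "gconvex k K \<longleftrightarrow> (\<forall>p\<in>K. \<forall>q\<in>K. \<forall>t\<in>{0..1}. nrm k ((1 - t) *\<^sub>R p + t *\<^sub>R q) \<in> K)"

text \<open>Closed half-plane bounded by the geodesic through F = gamma_om k w r
  perpendicular to gamma_om k w, on the side containing gamma_om k w t for t < r.\<close>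
definition halfplane :: "real \<Rightarrow> real \<Rightarrow> real \<Rightarrow> (real^3) set" where
  "halfplane k w r = {p \<in> Mk k.
      Bk k (p - gamma_om k w r) (vector_derivative (gamma_om k w) (at r)) \<le> 0}"

text \<open>The 1-form ell(rho)^2 d theta evaluated at p on the tangent vector v: with
  p = (ell rho cos theta, ell rho sin theta, 1 - k a rho) it equals X dY - Y dX.\<close>
definition lsq_dtheta :: "real^3 \<Rightarrow> real^3 \<Rightarrow> real" where
  "lsq_dtheta p v = p$1 * v$2 - p$2 * v$1"

definition C2_curve :: "(real \<Rightarrow> real^3) \<Rightarrow> bool" where
  "C2_curve g \<longleftrightarrow> (\<forall>s. g differentiable (at s)) \<and>
     (\<forall>s. (\<lambda>t. vector_derivative g (at t)) differentiable (at s)) \<and>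
     continuous_on UNIV (\<lambda>s. vector_derivative (\<lambda>t. vector_derivative g (at t)) (at s))"

definition kappa_g :: "real \<Rightarrow> (real \<Rightarrow> real^3) \<Rightarrow> real \<Rightarrow> real" where
  "kappa_g k g s = Bk k (vector_derivative (\<lambda>t. vector_derivative g (at t)) (at s))
                        (Jk k (g s) (vector_derivative g (at s)))"

end

(*
  The support line at gamma(s) is cut out of the model by a plane through the origin with normal
  n = (cosk r cos omega, cosk r sin omega, -ell r). As it touches the boundary at gamma(s), n is
  orthogonal to gamma(s) and to gamma'(s), hence parallel to N = gamma x gamma'. Thus
  (cos omega, sin omega) is parallel to the horizontal part N_h of N, which makes omega
  differentiable with omega' = gamma_3 kappa_g / |N_h|^2, and moreover cosk(r)^2 = |N_h|^2 and
  gamma_3 = cosk(x) cosk(r). Along any unit-speed curve of the model a polynomial identity turns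
  omega' ell(rho)^2 theta' into 1 - Phi', where the potential Phi = -x is periodic; so both
  integrands integrate to the length L over a period.
*)
theory Submission
  imports Defs "HOL-Library.Periodic_Fun"
begin

unbundle cross3_syntax

lemma has_real_derivative_vec_nth:
  fixes f :: "real \<Rightarrow> real^'n"
  assumes "(f has_vector_derivative f') (at s)"
  shows "((\<lambda>s. f s $ i) has_real_derivative f' $ i) (at s)"
  using bounded_linear.has_vector_derivative[OF bounded_linear_vec_nth assms, of i]
  by (simp add: has_real_derivative_iff_has_vector_derivative)

lemma has_real_derivative_constant_eq_0:
  assumes "(f has_real_derivative D) (at s)" and "\<And>t. f t = c"
  shows "D = 0"
proof -
  have "f = (\<lambda>t. c)"
    using assms(2) by auto
  with assms(1) have "((\<lambda>t. c) has_real_derivative D) (at s)"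
    by simp
  then show ?thesis
    using DERIV_const DERIV_unique by blast
qed

lemma inner_derivative_eq_0_at_max:
  fixes \<gamma> :: "real \<Rightarrow> 'a::real_inner"
  assumes "(\<gamma> has_vector_derivative v) (at s)" and "\<And>t. n \<bullet> \<gamma> t \<le> n \<bullet> \<gamma> s"
  shows "n \<bullet> v = 0"
proof -
  have "((\<lambda>t. n \<bullet> \<gamma> t) has_real_derivative n \<bullet> v) (at s)"
    using bounded_linear.has_vector_derivative[OF bounded_linear_inner_right assms(1)]
    by (simp add: has_real_derivative_iff_has_vector_derivative)
  then show ?thesis
    by (rule DERIV_local_max[of _ _ s 1]) (use assms(2) in auto)
qed

lemma periodic_in_image:
  fixes g :: "real \<Rightarrow> 'a"
  assumes "\<And>s. g (s + L) = g s" and "L > 0"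
  shows "g s \<in> g ` {0..L}"
proof -
  interpret periodic_fun_simple g L
    using assms(1) by unfold_locales
  define n where "n = \<lfloor>s / L\<rfloor>"
  have "of_int n * L \<le> s" "s < (of_int n + 1) * L"
    using assms(2) unfolding n_def
    by (simp_all add: pos_le_divide_eq[symmetric] pos_divide_less_eq[symmetric])
  then have "s - of_int n * L \<in> {0..L}"
    by (auto simp: algebra_simps)
  moreover have "g (s - of_int n * L) = g s"
    by (rule minus_of_int)
  ultimately show ?thesis
    by (intro image_eqI[of _ g "s - of_int n * L"]) simp_all
qed

lemma vector_derivative_periodic:
  assumes "\<And>s. g (s + L) = g s" and "g differentiable (at s)"
  shows "vector_derivative g (at (s + L)) = vector_derivative g (at s)"
proof -
  have "((\<lambda>t. t - L) has_vector_derivative 1) (at (s + L))"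
    by (auto intro!: derivative_eq_intros simp: has_real_derivative_iff_has_vector_derivative[symmetric])
  moreover have "(g has_vector_derivative vector_derivative g (at s)) (at s)"
    using assms(2) vector_derivative_works by blast
  ultimately have "((g \<circ> (\<lambda>t. t - L)) has_vector_derivative vector_derivative g (at s)) (at (s + L))"
    using vector_diff_chain_at[of "\<lambda>t. t - L" 1 "s + L" g] by simp
  moreover have "g \<circ> (\<lambda>t. t - L) = g"
    by (simp add: fun_eq_iff) (metis assms(1) diff_add_cancel)
  ultimately show ?thesis
    by (simp add: vector_derivative_at)
qed

text \<open>Whatever the orientation of \<open>(cos \<omega>, sin \<omega>)\<close> relative to \<open>g\<close>, the tangent of
  \<open>\<omega>(t) - \<omega>(s)\<close> is \<open>(g(s) \<times> g(t)) / (g(s) \<cdot> g(t))\<close>; continuity selects the branch of arctan.\<close>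

lemma continuous_angle_eventually_arctan:
  fixes \<omega> g1 g2 :: "real \<Rightarrow> real"
  assumes "isCont \<omega> s" and "isCont g1 s" and "isCont g2 s"
    and parallel: "\<And>t. cos (\<omega> t) * g2 t = sin (\<omega> t) * g1 t"
    and nonzero: "(g1 s)\<^sup>2 + (g2 s)\<^sup>2 \<noteq> 0"
  shows "\<forall>\<^sub>F t in nhds s.
    \<omega> t = \<omega> s + arctan ((g1 s * g2 t - g2 s * g1 t) / (g1 s * g1 t + g2 s * g2 t))"
proof -
  define N where "N t = g1 s * g2 t - g2 s * g1 t" for t
  define D where "D t = g1 s * g1 t + g2 s * g2 t" for t
  have tan: "sin (\<omega> t - \<omega> s) * D t = cos (\<omega> t - \<omega> s) * N t" for t
    using parallel[of t] parallel[of s] sin_cos_squared_add[of "\<omega> t"] sin_cos_squared_add[of "\<omega> s"]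
    unfolding N_def D_def sin_diff cos_diff by algebra
  have "D s > 0"
    using nonzero unfolding D_def by (simp add: add_pos_nonneg sum_power2_gt_zero_iff flip: power2_eq_square)
  moreover have "(D \<longlongrightarrow> D s) (nhds s)"
    using assms(2,3) unfolding D_def
    by (auto simp: isCont_def tendsto_at_iff_tendsto_nhds intro!: tendsto_intros)
  ultimately have "\<forall>\<^sub>F t in nhds s. D t > 0"
    by (rule order_tendstoD[rotated])
  moreover have "((\<lambda>t. \<omega> t - \<omega> s) \<longlongrightarrow> 0) (nhds s)"
    using assms(1) by (simp add: isCont_def tendsto_at_iff_tendsto_nhds LIM_zero)
  then have "\<forall>\<^sub>F t in nhds s. - (pi / 2) < \<omega> t - \<omega> s" "\<forall>\<^sub>F t in nhds s. \<omega> t - \<omega> s < pi / 2"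
    by (rule order_tendstoD; simp)+
  ultimately show ?thesis
    unfolding N_def[symmetric] D_def[symmetric]
  proof eventually_elim
    case (elim t)
    then have "cos (\<omega> t - \<omega> s) > 0"
      by (intro cos_gt_zero_pi) auto
    with elim tan[of t] have "N t / D t = tan (\<omega> t - \<omega> s)"
      by (simp add: tan_def field_simps)
    with elim show ?case
      by (simp add: arctan_tan)
  qed
qed

lemma has_real_derivative_continuous_angle:
  fixes \<omega> g1 g2 :: "real \<Rightarrow> real"
  assumes "isCont \<omega> s"
    and g1: "(g1 has_real_derivative g1') (at s)" and g2: "(g2 has_real_derivative g2') (at s)"
    and parallel: "\<And>t. cos (\<omega> t) * g2 t = sin (\<omega> t) * g1 t"
    and nonzero: "(g1 s)\<^sup>2 + (g2 s)\<^sup>2 \<noteq> 0"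
  shows "(\<omega> has_real_derivative (g1 s * g2' - g2 s * g1') / ((g1 s)\<^sup>2 + (g2 s)\<^sup>2)) (at s)"
proof -
  define N where "N t = g1 s * g2 t - g2 s * g1 t" for t
  define D where "D t = g1 s * g1 t + g2 s * g2 t" for t
  have Ds: "D s = (g1 s)\<^sup>2 + (g2 s)\<^sup>2"
    unfolding D_def by (simp add: power2_eq_square)
  have "(N has_real_derivative g1 s * g2' - g2 s * g1') (at s)"
    unfolding N_def by (auto intro!: derivative_eq_intros g1 g2)
  moreover have "(D has_real_derivative g1 s * g1' + g2 s * g2') (at s)"
    unfolding D_def by (auto intro!: derivative_eq_intros g1 g2)
  moreover have "D s \<noteq> 0"
    using nonzero Ds by simp
  ultimately have "((\<lambda>t. N t / D t) has_real_derivative (g1 s * g2' - g2 s * g1') / D s) (at s)"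
    using DERIV_divide by (force simp: N_def power2_eq_square)
  then have "((\<lambda>t. \<omega> s + arctan (N t / D t)) has_real_derivative
      0 + inverse (1 + (N s / D s)\<^sup>2) * ((g1 s * g2' - g2 s * g1') / D s)) (at s)"
    by (intro DERIV_add DERIV_const DERIV_chain2[OF DERIV_arctan])
  then have "((\<lambda>t. \<omega> s + arctan (N t / D t)) has_real_derivative
      (g1 s * g2' - g2 s * g1') / ((g1 s)\<^sup>2 + (g2 s)\<^sup>2)) (at s)"
    by (simp add: N_def Ds)
  moreover have "\<forall>\<^sub>F t in nhds s. \<omega> t = \<omega> s + arctan (N t / D t)"
    unfolding N_def D_def
    using continuous_angle_eventually_arctan[OF assms(1) DERIV_isCont[OF g1] DERIV_isCont[OF g2]
        parallel nonzero] .
  ultimately show ?thesis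
    by (subst DERIV_cong_ev[OF refl _ refl]) auto
qed

lemma bounded_bilinear_cross3: "bounded_bilinear cross3"
  using bilinear_cross bilinear_conv_bounded_bilinear by blast

section \<open>Trigonometry of the space form\<close>

text \<open>The cosine of the space form, \<open>\<ell>(r) c(r)\<close> in the paper.\<close>

definition cosk :: "real \<Rightarrow> real \<Rightarrow> real" where
  "cosk k r = 1 - k * aa k r"

lemma cosk_eq:
  "cosk k r = (if k > 0 then cos (sqrt k * r) else if k = 0 then 1 else cosh (sqrt (-k) * r))"
  unfolding cosk_def aa_def by auto

lemma cosk_sq_plus_ell_sq: "(cosk k r)\<^sup>2 + k * (ell k r)\<^sup>2 = 1"
proof -
  consider "k > 0" | "k = 0" | "k < 0" by linarith
  then show ?thesis
  proof cases
    case 1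
    then have "k * (sin (sqrt k * r) / sqrt k)\<^sup>2 = (sin (sqrt k * r))\<^sup>2"
      by (simp add: power_divide)
    with 1 show ?thesis by (simp add: cosk_eq ell_def)
  next
    case 2
    then show ?thesis by (simp add: cosk_eq ell_def)
  next
    case 3
    then have "k * (sinh (sqrt (-k) * r) / sqrt (-k))\<^sup>2 = - (sinh (sqrt (-k) * r))\<^sup>2"
      by (simp add: power_divide)
    with 3 show ?thesis by (simp add: cosk_eq ell_def cosh_square_eq)
  qed
qed

lemma has_real_derivative_ell: "(ell k has_real_derivative cosk k r) (at r)"
proof -
  consider "k > 0" | "k = 0" | "k < 0" by linarith
  then show ?thesis
  proof cases
    case 1
    then have "((\<lambda>r. sin (sqrt k * r) / sqrt k) has_real_derivative cos (sqrt k * r)) (at r)"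
      by (auto intro!: derivative_eq_intros simp: mult.assoc)
    with 1 show ?thesis unfolding ell_def[abs_def] cosk_eq by simp
  next
    case 2
    then show ?thesis unfolding ell_def[abs_def] cosk_eq by (auto intro!: derivative_eq_intros)
  next
    case 3
    then have "((\<lambda>r. sinh (sqrt (-k) * r) / sqrt (-k)) has_real_derivative cosh (sqrt (-k) * r)) (at r)"
      by (auto intro!: derivative_eq_intros simp: mult.assoc)
    with 3 show ?thesis unfolding ell_def[abs_def] cosk_eq by simp
  qed
qed

lemma has_real_derivative_cosk: "(cosk k has_real_derivative - k * ell k r) (at r)"
proof -
  consider "k > 0" | "k = 0" | "k < 0" by linarith
  then show ?thesis
  proof cases
    case 1
    then have "((\<lambda>r. cos (sqrt k * r)) has_real_derivative - k * (sin (sqrt k * r) / sqrt k)) (at r)"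
      by (auto intro!: derivative_eq_intros simp: field_simps)
    with 1 show ?thesis unfolding ell_def cosk_eq[abs_def] by simp
  next
    case 2
    then show ?thesis unfolding ell_def cosk_eq[abs_def] by (auto intro!: derivative_eq_intros)
  next
    case 3
    then have "sqrt (-k) * sqrt (-k) = -k" by simp
    with 3 have "((\<lambda>r. cosh (sqrt (-k) * r)) has_real_derivative
        - k * (sinh (sqrt (-k) * r) / sqrt (-k))) (at r)"
      by (auto intro!: derivative_eq_intros simp: field_simps mult.assoc[symmetric])
    with 3 show ?thesis unfolding ell_def cosk_eq[abs_def] by simp
  qed
qed

text \<open>The inverse of the tangent \<open>ell k / cosk k\<close> of the space form.\<close>

definition atk :: "real \<Rightarrow> real \<Rightarrow> real" where
  "atk k y = (if k > 0 then arctan (sqrt k * y) / sqrt k else if k = 0 then y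
              else artanh (sqrt (-k) * y) / sqrt (-k))"

lemma has_real_derivative_atk:
  assumes "1 + k * y\<^sup>2 > 0"
  shows "(atk k has_real_derivative 1 / (1 + k * y\<^sup>2)) (at y)"
proof -
  consider "k > 0" | "k = 0" | "k < 0" by linarith
  then show ?thesis
  proof cases
    case 1
    then have "k + k * (k * y\<^sup>2) \<noteq> 0"
      using assms by (metis distrib_left mult_1_right mult_eq_0_iff order_less_irrefl)
    with 1 have "((\<lambda>y. arctan (sqrt k * y) / sqrt k) has_real_derivative 1 / (1 + k * y\<^sup>2)) (at y)"
      using assms by (auto intro!: derivative_eq_intros simp: power_mult_distrib field_simps)
    with 1 show ?thesis unfolding atk_def[abs_def] by simp
  next
    case 2
    then show ?thesis unfolding atk_def[abs_def] by (auto intro!: derivative_eq_intros)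
  next
    case 3
    have sq: "(sqrt (-k) * y)\<^sup>2 = - k * y\<^sup>2"
      using 3 by (simp add: power_mult_distrib)
    then have "\<bar>sqrt (-k) * y\<bar> < 1"
      using assms by (simp add: abs_square_less_1[symmetric])
    then have "((\<lambda>y. artanh (sqrt (-k) * y) / sqrt (-k)) has_real_derivative
        1 / (1 - (sqrt (-k) * y)\<^sup>2) * sqrt (-k) / sqrt (-k)) (at y)"
      by (intro DERIV_cdivide DERIV_chain2[OF artanh_real_has_field_derivative])
        (auto intro!: derivative_eq_intros)
    with 3 show ?thesis unfolding atk_def[abs_def] sq by simp
  qed
qed

section \<open>The geodesics \<open>\<gamma>\<^sub>\<omega>\<close> and their perpendiculars\<close>

lemma gamma_om_eq: "gamma_om k w t = vector [ell k t * cos w, ell k t * sin w, cosk k t]"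
  unfolding gamma_om_def expm_def Oo_def cosk_def
  by (simp add: vec_eq_iff forall_3 vector_3)

lemma gamma_om_has_vector_derivative:
  "(gamma_om k w has_vector_derivative vector [cosk k t * cos w, cosk k t * sin w, - k * ell k t]) (at t)"
proof -
  have "gamma_om k w = (\<lambda>t. cosk k t *\<^sub>R Oo + ell k t *\<^sub>R vector [cos w, sin w, 0])"
    unfolding gamma_om_def expm_def cosk_def by auto
  moreover have "((\<lambda>t. cosk k t *\<^sub>R Oo + ell k t *\<^sub>R vector [cos w, sin w, 0]) has_vector_derivative
      (- k * ell k t) *\<^sub>R Oo + cosk k t *\<^sub>R (vector [cos w, sin w, 0] :: real^3)) (at t)"
    using has_real_derivative_cosk[of k t] has_real_derivative_ell[of k t]
    by (auto intro!: derivative_eq_intros simp: has_real_derivative_iff_has_vector_derivative)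
  moreover have "(- k * ell k t) *\<^sub>R Oo + cosk k t *\<^sub>R (vector [cos w, sin w, 0] :: real^3)
      = vector [cosk k t * cos w, cosk k t * sin w, - k * ell k t]"
    unfolding Oo_def by (simp add: vec_eq_iff forall_3 vector_3)
  ultimately show ?thesis
    by simp
qed

lemma vector_derivative_gamma_om:
  "vector_derivative (gamma_om k w) (at t) = vector [cosk k t * cos w, cosk k t * sin w, - k * ell k t]"
  using gamma_om_has_vector_derivative vector_derivative_at by blast

lemma Jk_gamma_om: "Jk k (gamma_om k w t) (vector_derivative (gamma_om k w) (at t)) = vector [- sin w, cos w, 0]"
proof -
  have "(cosk k t)\<^sup>2 = 1 - k * (ell k t)\<^sup>2"
    using cosk_sq_plus_ell_sq[of k t] by simp
  then show ?thesis
    unfolding vector_derivative_gamma_om gamma_om_eq Jk_def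
    by (simp add: vec_eq_iff forall_3) algebra
qed

lemma expm_perpendicular_eq:
  "expm k (gamma_om k w r) (- Jk k (gamma_om k w r) (vector_derivative (gamma_om k w) (at r))) x
   = vector [cosk k x * ell k r * cos w + ell k x * sin w,
             cosk k x * ell k r * sin w - ell k x * cos w, cosk k x * cosk k r]"
  unfolding Jk_gamma_om unfolding expm_def gamma_om_eq cosk_def[symmetric]
  by (simp add: vec_eq_iff forall_3)

text \<open>Geodesics of the model are its sections by planes through the origin. This is the Euclidean
  normal of the plane containing the geodesic perpendicular to \<open>\<gamma>\<^sub>\<omega>\<close> at \<open>\<gamma>\<^sub>\<omega>(r)\<close>, oriented
  away from \<open>O\<close>.\<close>

definition line_normal :: "real \<Rightarrow> real \<Rightarrow> real \<Rightarrow> real^3" where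
  "line_normal k w r = vector [cosk k r * cos w, cosk k r * sin w, - ell k r]"

lemma line_normal_k_norm: "(line_normal k w r $ 1)\<^sup>2 + (line_normal k w r $ 2)\<^sup>2 + k * (line_normal k w r $ 3)\<^sup>2 = 1"
  using cosk_sq_plus_ell_sq[of k r] unfolding line_normal_def
  by (simp add: power_mult_distrib) (use sin_cos_squared_add[of w] in algebra)

lemma halfplane_eq: "halfplane k w r = {p \<in> Mk k. line_normal k w r \<bullet> p \<le> 0}"
proof -
  have "Bk k (p - gamma_om k w r) (vector_derivative (gamma_om k w) (at r)) = line_normal k w r \<bullet> p"
    if "p \<in> Mk k" for p
  proof (cases "k = 0")
    case True
    with that have "p $ 3 = 1"
      unfolding Mk_def by (auto simp: power2_eq_1_iff)
    with True show ?thesis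
      unfolding Bk_def vector_derivative_gamma_om gamma_om_eq line_normal_def
      by (simp add: cosk_def ell_def inner_vec_def sum_3 algebra_simps flip: distrib_left)
  next
    case False
    then show ?thesis
      unfolding Bk_def vector_derivative_gamma_om gamma_om_eq line_normal_def
      by (simp add: inner_vec_def sum_3 field_simps) (use sin_cos_squared_add[of w] in algebra)
  qed
  then show ?thesis
    unfolding halfplane_def by auto
qed

section \<open>Unit-speed curves in the model\<close>

text \<open>The coordinate form of \<open>normal_rotation_eq\<close> below, with \<open>p = \<gamma>\<close>, \<open>t = \<gamma>'\<close>,
  \<open>u = \<gamma>''\<close>.\<close>

lemma space_form_rotation_identity:
  fixes k p1 p2 p3 t1 t2 t3 u1 u2 u3 :: real
  assumes "k \<noteq> 0" "k * (p1\<^sup>2 + p2\<^sup>2) + p3\<^sup>2 = 1" "k * (p1 * t1 + p2 * t2) + p3 * t3 = 0"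
    "k * (t1\<^sup>2 + t2\<^sup>2) + t3\<^sup>2 = k"
    "k * (t1\<^sup>2 + t2\<^sup>2 + p1 * u1 + p2 * u2) + t3\<^sup>2 + p3 * u3 = 0"
    "k * (t1 * u1 + t2 * u2) + t3 * u3 = 0"
  shows "(t1\<^sup>2 + t2\<^sup>2 + p1 * u1 + p2 * u2) * p3 - 2 * t3 * (p1 * t1 + p2 * t2)
     + p3\<^sup>2 * (u1 * (p2 * t3 - t2 * p3) + u2 * (p3 * t1 - t3 * p1) + u3 * (p1 * t2 - t1 * p2))
       * (p1 * t2 - t1 * p2)
   = p3 * ((p2 * t3 - t2 * p3)\<^sup>2 + (p3 * t1 - t3 * p1)\<^sup>2)"
  using assms by algebra

locale space_form_curve =
  fixes k :: real and \<gamma> :: "real \<Rightarrow> real^3"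
  assumes differentiable: "\<And>s. \<gamma> differentiable (at s)"
    and differentiable_velocity: "\<And>s. (\<lambda>t. vector_derivative \<gamma> (at t)) differentiable (at s)"
    and on_Mk: "\<And>s. \<gamma> s \<in> Mk k"
    and upper: "\<And>s. \<gamma> s $ 3 > 0"
    and unit_speed: "\<And>s. Bk k (vector_derivative \<gamma> (at s)) (vector_derivative \<gamma> (at s)) = 1"
begin

definition T :: "real \<Rightarrow> real^3" where
  "T s = vector_derivative \<gamma> (at s)"

definition U :: "real \<Rightarrow> real^3" where
  "U s = vector_derivative T (at s)"

lemma has_vector_derivative_curve: "(\<gamma> has_vector_derivative T s) (at s)"
  using differentiable[of s] vector_derivative_works unfolding T_def by blast

lemma has_vector_derivative_T: "(T has_vector_derivative U s) (at s)"
proof -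
  have "T = (\<lambda>t. vector_derivative \<gamma> (at t))"
    by (simp add: fun_eq_iff T_def)
  then show ?thesis
    using differentiable_velocity[of s] vector_derivative_works unfolding U_def by metis
qed

lemma has_real_derivative_curve_nth: "((\<lambda>s. \<gamma> s $ i) has_real_derivative T s $ i) (at s)"
  by (rule has_real_derivative_vec_nth[OF has_vector_derivative_curve])

lemma has_real_derivative_T_nth: "((\<lambda>s. T s $ i) has_real_derivative U s $ i) (at s)"
  by (rule has_real_derivative_vec_nth[OF has_vector_derivative_T])

lemma on_Mk_eq: "k * ((\<gamma> s $ 1)\<^sup>2 + (\<gamma> s $ 2)\<^sup>2) + (\<gamma> s $ 3)\<^sup>2 = 1"
  using on_Mk[of s] unfolding Mk_def by simp

lemma unit_speed_eq: "(T s $ 1)\<^sup>2 + (T s $ 2)\<^sup>2 + (T s $ 3)\<^sup>2 / k = 1"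
  using unit_speed[of s] unfolding Bk_def T_def by (simp add: power2_eq_square)

lemma tangent_eq: "k * (\<gamma> s $ 1 * T s $ 1 + \<gamma> s $ 2 * T s $ 2) + \<gamma> s $ 3 * T s $ 3 = 0"
proof -
  have "((\<lambda>s. k * ((\<gamma> s $ 1)\<^sup>2 + (\<gamma> s $ 2)\<^sup>2) + (\<gamma> s $ 3)\<^sup>2) has_real_derivative
      2 * (k * (\<gamma> s $ 1 * T s $ 1 + \<gamma> s $ 2 * T s $ 2) + \<gamma> s $ 3 * T s $ 3)) (at s)"
    by (auto intro!: derivative_eq_intros has_real_derivative_curve_nth simp: algebra_simps)
  from has_real_derivative_constant_eq_0[OF this on_Mk_eq] show ?thesis
    by simp
qed

lemma acceleration_eq:
  "k * ((T s $ 1)\<^sup>2 + (T s $ 2)\<^sup>2 + \<gamma> s $ 1 * U s $ 1 + \<gamma> s $ 2 * U s $ 2) + (T s $ 3)\<^sup>2 + \<gamma> s $ 3 * U s $ 3 = 0"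
proof -
  have "((\<lambda>s. k * (\<gamma> s $ 1 * T s $ 1 + \<gamma> s $ 2 * T s $ 2) + \<gamma> s $ 3 * T s $ 3) has_real_derivative
      k * ((T s $ 1)\<^sup>2 + (T s $ 2)\<^sup>2 + \<gamma> s $ 1 * U s $ 1 + \<gamma> s $ 2 * U s $ 2) + (T s $ 3)\<^sup>2 + \<gamma> s $ 3 * U s $ 3) (at s)"
    by (auto intro!: derivative_eq_intros has_real_derivative_curve_nth has_real_derivative_T_nth
        simp: algebra_simps power2_eq_square)
  from has_real_derivative_constant_eq_0[OF this tangent_eq] show ?thesis .
qed

lemma acceleration_orthogonal: "T s $ 1 * U s $ 1 + T s $ 2 * U s $ 2 + T s $ 3 * U s $ 3 / k = 0"
proof -
  define c where "c = 1 / k"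
  have "((\<lambda>s. (T s $ 1)\<^sup>2 + (T s $ 2)\<^sup>2 + c * (T s $ 3)\<^sup>2) has_real_derivative
      2 * (T s $ 1 * U s $ 1 + T s $ 2 * U s $ 2 + c * (T s $ 3 * U s $ 3))) (at s)"
    by (auto intro!: derivative_eq_intros has_real_derivative_T_nth simp: algebra_simps)
  from has_real_derivative_constant_eq_0[OF this] unit_speed_eq show ?thesis
    by (simp add: c_def)
qed

lemma flat_case:
  assumes "k = 0"
  shows "\<gamma> s $ 3 = 1" "T s $ 3 = 0" "U s $ 3 = 0"
    "(T s $ 1)\<^sup>2 + (T s $ 2)\<^sup>2 = 1" "T s $ 1 * U s $ 1 + T s $ 2 * U s $ 2 = 0"
  using on_Mk_eq[of s] upper[of s] tangent_eq[of s] acceleration_eq[of s] unit_speed_eq[of s]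
    acceleration_orthogonal[of s] assms
  by (auto simp: power2_eq_1_iff)

lemma curved_case:
  assumes "k \<noteq> 0"
  shows "k * ((T s $ 1)\<^sup>2 + (T s $ 2)\<^sup>2) + (T s $ 3)\<^sup>2 = k"
    "k * (T s $ 1 * U s $ 1 + T s $ 2 * U s $ 2) + T s $ 3 * U s $ 3 = 0"
  using unit_speed_eq[of s] acceleration_orthogonal[of s] assms by (simp_all add: field_simps)

text \<open>The rotated tangent is \<open>Jk k \<gamma> T = (N$1, N$2, k N$3)\<close>; unlike it, \<open>N\<close> does not
  degenerate for \<open>k = 0\<close>.\<close>

definition N :: "real \<Rightarrow> real^3" where
  "N s = \<gamma> s \<times> T s"

lemma N_nth:
  "N s $ 1 = \<gamma> s $ 2 * T s $ 3 - T s $ 2 * \<gamma> s $ 3"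
  "N s $ 2 = \<gamma> s $ 3 * T s $ 1 - T s $ 3 * \<gamma> s $ 1"
  "N s $ 3 = \<gamma> s $ 1 * T s $ 2 - T s $ 1 * \<gamma> s $ 2"
  unfolding N_def by (simp_all add: cross_components)

lemma lsq_dtheta_eq: "lsq_dtheta (\<gamma> s) (vector_derivative \<gamma> (at s)) = N s $ 3"
  unfolding lsq_dtheta_def N_nth T_def by simp

lemma kappa_g_eq: "kappa_g k \<gamma> s = U s \<bullet> N s"
proof -
  have "kappa_g k \<gamma> s = U s $ 1 * N s $ 1 + U s $ 2 * N s $ 2 + U s $ 3 * (k * N s $ 3) / k"
    unfolding kappa_g_def Bk_def Jk_def N_nth U_def T_def[abs_def] by (simp add: algebra_simps)
  then show ?thesis
    using flat_case(3)[of s] by (cases "k = 0") (auto simp: inner_vec_def sum_3)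
qed

lemma has_vector_derivative_N: "(N has_vector_derivative \<gamma> s \<times> U s) (at s)"
  using bounded_bilinear.has_vector_derivative[OF bounded_bilinear_cross3
      has_vector_derivative_curve has_vector_derivative_T]
  unfolding N_def[abs_def] by simp

lemma normal_k_norm: "(N s $ 1)\<^sup>2 + (N s $ 2)\<^sup>2 + k * (N s $ 3)\<^sup>2 = 1"
proof (cases "k = 0")
  case True
  with flat_case[of s] show ?thesis
    unfolding N_nth by simp
next
  case False
  with curved_case[of s] on_Mk_eq[of s] tangent_eq[of s] show ?thesis
    unfolding N_nth by algebra
qed

lemma normal_horizontal_eq:
  "(\<gamma> s $ 3)\<^sup>2 * ((N s $ 1)\<^sup>2 + (N s $ 2)\<^sup>2)
     = (\<gamma> s $ 3) ^ 4 + k * (\<gamma> s $ 1 * T s $ 1 + \<gamma> s $ 2 * T s $ 2)\<^sup>2"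
proof (cases "k = 0")
  case True
  with flat_case[of s] show ?thesis
    unfolding N_nth by simp
next
  case False
  with curved_case[of s] on_Mk_eq[of s] tangent_eq[of s] show ?thesis
    unfolding N_nth by algebra
qed

lemma normal_rotation_eq:
  "((T s $ 1)\<^sup>2 + (T s $ 2)\<^sup>2 + \<gamma> s $ 1 * U s $ 1 + \<gamma> s $ 2 * U s $ 2) * \<gamma> s $ 3
     - 2 * T s $ 3 * (\<gamma> s $ 1 * T s $ 1 + \<gamma> s $ 2 * T s $ 2)
     + (\<gamma> s $ 3)\<^sup>2 * (U s \<bullet> N s) * N s $ 3
   = \<gamma> s $ 3 * ((N s $ 1)\<^sup>2 + (N s $ 2)\<^sup>2)"
proof (cases "k = 0")
  case True
  with flat_case[of s] show ?thesis
    unfolding N_nth inner_vec_def sum_3 by simp algebra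
next
  case False
  from space_form_rotation_identity[OF False on_Mk_eq tangent_eq curved_case(1)[OF False]
      acceleration_eq curved_case(2)[OF False]]
  show ?thesis
    unfolding N_nth inner_vec_def sum_3 by simp
qed

lemma normal_horizontal_pos: "(N s $ 1)\<^sup>2 + (N s $ 2)\<^sup>2 > 0"
proof (cases "k > 0")
  case True
  then have "(\<gamma> s $ 3)\<^sup>2 * ((N s $ 1)\<^sup>2 + (N s $ 2)\<^sup>2) > 0"
    using upper[of s] unfolding normal_horizontal_eq by (intro add_pos_nonneg) auto
  then show ?thesis
    using zero_less_mult_pos by fastforce
next
  case False
  then have "k * (N s $ 3)\<^sup>2 \<le> 0"
    by (simp add: mult_nonpos_nonneg)
  with normal_k_norm[of s] show ?thesis
    by linarith
qed

text \<open>The potential equals \<open>-x\<close>, the negated abscissa of the foot point along the support line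
  (\<open>\<tau> = - ell k x / cosk k x\<close>); being a function of \<open>\<gamma>\<close> and \<open>T\<close> it is periodic.\<close>

definition potential :: "real \<Rightarrow> real" where
  "potential s = atk k ((\<gamma> s $ 1 * T s $ 1 + \<gamma> s $ 2 * T s $ 2) / (\<gamma> s $ 3)\<^sup>2)"

definition turning :: "real \<Rightarrow> real" where
  "turning s = \<gamma> s $ 3 * (U s \<bullet> N s) * N s $ 3 / ((N s $ 1)\<^sup>2 + (N s $ 2)\<^sup>2)"

lemma has_real_derivative_potential: "(potential has_real_derivative 1 - turning s) (at s)"
proof -
  define X where "X s = \<gamma> s $ 1 * T s $ 1 + \<gamma> s $ 2 * T s $ 2" for s
  define X' where "X' = (T s $ 1)\<^sup>2 + (T s $ 2)\<^sup>2 + \<gamma> s $ 1 * U s $ 1 + \<gamma> s $ 2 * U s $ 2"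
  define H where "H = (N s $ 1)\<^sup>2 + (N s $ 2)\<^sup>2"
  let ?p = "\<gamma> s $ 3"
  have "?p > 0" "H > 0"
    unfolding H_def using upper normal_horizontal_pos by auto
  have "(X has_real_derivative X') (at s)"
    unfolding X_def[abs_def] X'_def
    by (auto intro!: derivative_eq_intros has_real_derivative_curve_nth has_real_derivative_T_nth
        simp: power2_eq_square)
  moreover have "((\<lambda>s. (\<gamma> s $ 3)\<^sup>2) has_real_derivative 2 * ?p * T s $ 3) (at s)"
    by (auto intro!: derivative_eq_intros has_real_derivative_curve_nth)
  ultimately have dtau: "((\<lambda>s. X s / (\<gamma> s $ 3)\<^sup>2) has_real_derivative
      (X' * ?p\<^sup>2 - X s * (2 * ?p * T s $ 3)) / (?p\<^sup>2 * ?p\<^sup>2)) (at s)"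
    using \<open>?p > 0\<close> by (intro DERIV_divide) auto
  have rot: "X' * ?p - 2 * T s $ 3 * X s = ?p * H - ?p\<^sup>2 * (U s \<bullet> N s) * N s $ 3"
    using normal_rotation_eq[of s] unfolding X_def X'_def H_def by linarith
  have tau_sq: "1 + k * (X s / ?p\<^sup>2)\<^sup>2 = H / ?p\<^sup>2"
    using normal_horizontal_eq[of s] \<open>?p > 0\<close> unfolding X_def H_def
    by (simp add: field_simps power2_eq_square power4_eq_xxxx)
  with \<open>?p > 0\<close> \<open>H > 0\<close> have "1 + k * (X s / ?p\<^sup>2)\<^sup>2 > 0"
    by simp
  from DERIV_chain2[OF has_real_derivative_atk[OF this] dtau]
  have "(potential has_real_derivative
      1 / (H / ?p\<^sup>2) * ((X' * ?p\<^sup>2 - X s * (2 * ?p * T s $ 3)) / (?p\<^sup>2 * ?p\<^sup>2))) (at s)"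
    unfolding potential_def[abs_def] X_def[symmetric] tau_sq .
  moreover have "1 / (H / ?p\<^sup>2) * ((X' * ?p\<^sup>2 - X s * (2 * ?p * T s $ 3)) / (?p\<^sup>2 * ?p\<^sup>2))
      = (X' * ?p - 2 * T s $ 3 * X s) / (?p * H)"
    using \<open>?p > 0\<close> \<open>H > 0\<close> by (simp add: power2_eq_square field_simps)
  moreover have "(X' * ?p - 2 * T s $ 3 * X s) / (?p * H) = 1 - turning s"
    using \<open>?p > 0\<close> \<open>H > 0\<close> unfolding rot turning_def H_def[symmetric]
    by (simp add: field_simps power2_eq_square)
  ultimately show ?thesis
    by simp
qed

lemma turning_has_integral:
  assumes periodic: "\<And>s. \<gamma> (s + L) = \<gamma> s" and "L \<ge> 0"
  shows "(turning has_integral L) {0..L}"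
proof -
  have "T L = T 0"
    using vector_derivative_periodic[OF periodic differentiable, of 0] unfolding T_def by simp
  moreover have "\<gamma> L = \<gamma> 0"
    using periodic[of 0] by simp
  ultimately have "potential L = potential 0"
    unfolding potential_def by simp
  have "((\<lambda>s. s - potential s) has_vector_derivative turning s) (at s within {0..L})" for s
    using DERIV_diff[OF DERIV_ident has_real_derivative_potential[of s]]
    by (simp add: has_real_derivative_iff_has_vector_derivative has_vector_derivative_at_within)
  from fundamental_theorem_of_calculus[OF \<open>L \<ge> 0\<close> this]
  show ?thesis
    using \<open>potential L = potential 0\<close> by simp
qed

subsection \<open>Support lines\<close>

lemma parallel_to_normal:
  assumes "n \<bullet> \<gamma> s = 0" and "n \<bullet> T s = 0" and "(n $ 1)\<^sup>2 + (n $ 2)\<^sup>2 + k * (n $ 3)\<^sup>2 = 1"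
  shows "(n $ 1)\<^sup>2 + (n $ 2)\<^sup>2 = (N s $ 1)\<^sup>2 + (N s $ 2)\<^sup>2" and "n $ 1 * N s $ 2 = n $ 2 * N s $ 1"
proof -
  have "n \<times> N s = 0"
    unfolding N_def Lagrange using assms(1,2) by simp
  then have eq: "(N s \<bullet> N s) *\<^sub>R n = (N s \<bullet> n) *\<^sub>R N s"
    using Lagrange[of "N s" n "N s"] by simp
  have "N s \<bullet> N s \<noteq> 0"
    using normal_k_norm[of s] by auto
  then have "n = (1 / (N s \<bullet> N s)) *\<^sub>R ((N s \<bullet> N s) *\<^sub>R n)"
    by simp
  then obtain c where c: "n = c *\<^sub>R N s"
    unfolding eq scaleR_scaleR by blast
  with assms(3) have "c\<^sup>2 * ((N s $ 1)\<^sup>2 + (N s $ 2)\<^sup>2 + k * (N s $ 3)\<^sup>2) = 1"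
    by (simp add: power_mult_distrib algebra_simps)
  then have "c\<^sup>2 = 1"
    unfolding normal_k_norm by simp
  with c show "(n $ 1)\<^sup>2 + (n $ 2)\<^sup>2 = (N s $ 1)\<^sup>2 + (N s $ 2)\<^sup>2" "n $ 1 * N s $ 2 = n $ 2 * N s $ 1"
    by (simp_all add: power_mult_distrib flip: distrib_left)
qed

lemma supporting_line:
  assumes support: "\<And>t. line_normal k w r \<bullet> \<gamma> t \<le> 0"
    and foot: "\<gamma> s = expm k (gamma_om k w r) (- Jk k (gamma_om k w r) (vector_derivative (gamma_om k w) (at r))) x"
  shows "cos w * N s $ 2 = sin w * N s $ 1" and "(cosk k r)\<^sup>2 = (N s $ 1)\<^sup>2 + (N s $ 2)\<^sup>2"
    and "\<gamma> s $ 3 = cosk k x * cosk k r"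
proof -
  let ?n = "line_normal k w r"
  show \<gamma>3: "\<gamma> s $ 3 = cosk k x * cosk k r"
    unfolding foot expm_perpendicular_eq by simp
  have "?n \<bullet> \<gamma> s = 0"
    unfolding foot expm_perpendicular_eq line_normal_def
    by (simp add: inner_vec_def sum_3 algebra_simps) (use sin_cos_squared_add[of w] in algebra)
  then have "?n \<bullet> T s = 0"
    using support by (intro inner_derivative_eq_0_at_max[OF has_vector_derivative_curve]) simp
  note parallel = parallel_to_normal[OF \<open>?n \<bullet> \<gamma> s = 0\<close> this line_normal_k_norm]
  then show "(cosk k r)\<^sup>2 = (N s $ 1)\<^sup>2 + (N s $ 2)\<^sup>2"
    unfolding line_normal_def by (simp add: power_mult_distrib flip: distrib_left)
  have "cosk k r \<noteq> 0"
    using upper[of s] \<gamma>3 by auto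
  with parallel(2) show "cos w * N s $ 2 = sin w * N s $ 1"
    unfolding line_normal_def by simp
qed

lemma kappa_g_integrand_eq:
  assumes "\<And>t. line_normal k w r \<bullet> \<gamma> t \<le> 0"
    and "\<gamma> s = expm k (gamma_om k w r) (- Jk k (gamma_om k w r) (vector_derivative (gamma_om k w) (at r))) x"
  shows "kappa_g k \<gamma> s * lsq_dtheta (\<gamma> s) (vector_derivative \<gamma> (at s)) * cosk k x / cosk k r = turning s"
proof -
  have \<gamma>3: "\<gamma> s $ 3 = cosk k x * cosk k r"
    and horizontal: "(N s $ 1)\<^sup>2 + (N s $ 2)\<^sup>2 = (cosk k r)\<^sup>2"
    using supporting_line(2,3)[OF assms] by auto
  moreover have "cosk k r \<noteq> 0"
    using upper[of s] \<gamma>3 by auto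
  ultimately show ?thesis
    unfolding kappa_g_eq lsq_dtheta_eq turning_def \<gamma>3 horizontal
    by (simp add: power2_eq_square)
qed

lemma support_angle_has_real_derivative:
  assumes "continuous_on UNIV \<omega>"
    and support: "\<And>s t. line_normal k (\<omega> s) (r s) \<bullet> \<gamma> t \<le> 0"
    and foot: "\<And>s. \<gamma> s = expm k (gamma_om k (\<omega> s) (r s))
                   (- Jk k (gamma_om k (\<omega> s) (r s)) (vector_derivative (gamma_om k (\<omega> s)) (at (r s)))) (x s)"
  shows "(\<omega> has_real_derivative \<gamma> s $ 3 * (U s \<bullet> N s) / ((N s $ 1)\<^sup>2 + (N s $ 2)\<^sup>2)) (at s)"
proof -
  have "(\<omega> has_real_derivative
      (N s $ 1 * (\<gamma> s \<times> U s) $ 2 - N s $ 2 * (\<gamma> s \<times> U s) $ 1) / ((N s $ 1)\<^sup>2 + (N s $ 2)\<^sup>2)) (at s)"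
  proof (rule has_real_derivative_continuous_angle)
    show "isCont \<omega> s"
      using assms(1) by (simp add: continuous_on_eq_continuous_at)
    show "((\<lambda>s. N s $ 1) has_real_derivative (\<gamma> s \<times> U s) $ 1) (at s)"
      "((\<lambda>s. N s $ 2) has_real_derivative (\<gamma> s \<times> U s) $ 2) (at s)"
      by (rule has_real_derivative_vec_nth[OF has_vector_derivative_N])+
    show "cos (\<omega> t) * N t $ 2 = sin (\<omega> t) * N t $ 1" for t
      using supporting_line(1)[OF support foot] .
    show "(N s $ 1)\<^sup>2 + (N s $ 2)\<^sup>2 \<noteq> 0"
      using normal_horizontal_pos[of s] by linarith
  qed
  moreover have "N s $ 1 * (\<gamma> s \<times> U s) $ 2 - N s $ 2 * (\<gamma> s \<times> U s) $ 1 = \<gamma> s $ 3 * (U s \<bullet> N s)"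
    unfolding N_nth cross_components inner_vec_def sum_3 by (simp add: algebra_simps)
  ultimately show ?thesis
    by simp
qed

end

theorem theorem5p2:
  fixes k L :: real and K :: "(real^3) set" and \<gamma> :: "real \<Rightarrow> real^3"
    and \<omega> r x :: "real \<Rightarrow> real"
  assumes KM: "K \<subseteq> Mk k"
    and hemi: "k > 0 \<longrightarrow> (\<forall>p\<in>K. p$3 > 0)"
    and cpt: "compact K"
    and cvx: "gconvex k K"
    and int: "(top_of_set (Mk k)) interior_of K \<noteq> {}"
    and Lpos: "L > 0"
    and C2: "C2_curve \<gamma>"
    and per: "\<forall>s. \<gamma> (s + L) = \<gamma> s"
    and inj: "inj_on \<gamma> {0..<L}"
    and bd: "\<gamma> ` {0..L} = (top_of_set (Mk k)) frontier_of K"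
    and unit: "\<forall>s. Bk k (vector_derivative \<gamma> (at s)) (vector_derivative \<gamma> (at s)) = 1"
    and ccw: "\<forall>s. \<exists>\<epsilon>>0. \<forall>t\<in>{0<..<\<epsilon>}.
               expm k (\<gamma> s) (Jk k (\<gamma> s) (vector_derivative \<gamma> (at s))) t
                 \<in> (top_of_set (Mk k)) interior_of K"
    and om_cont: "continuous_on UNIV \<omega>"
    and supp: "\<forall>s. K \<subseteq> halfplane k (\<omega> s) (r s)"
    and foot: "\<forall>s. \<gamma> s = expm k (gamma_om k (\<omega> s) (r s))
                   (- Jk k (gamma_om k (\<omega> s) (r s))
                         (vector_derivative (gamma_om k (\<omega> s)) (at (r s))))
                   (x s)"
  shows "(\<forall>s. \<omega> differentiable (at s))
    \<and> ((\<lambda>s. deriv \<omega> s * lsq_dtheta (\<gamma> s) (vector_derivative \<gamma> (at s)))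
          has_integral L) {0..L}
    \<and> ((\<lambda>s. kappa_g k \<gamma> s * lsq_dtheta (\<gamma> s) (vector_derivative \<gamma> (at s))
              * (1 - k * aa k (x s)) / (1 - k * aa k (r s)))
          has_integral L) {0..L}"
proof -
  have "closedin (top_of_set (Mk k)) K"
    using closed_subset[OF KM compact_imp_closed[OF cpt]] .
  then have inK: "\<gamma> s \<in> K" for s
    using periodic_in_image[of \<gamma> L s] per Lpos bd frontier_of_subset_closedin by fastforce
  interpret space_form_curve k \<gamma>
  proof
    show "\<gamma> differentiable (at s)" "(\<lambda>t. vector_derivative \<gamma> (at t)) differentiable (at s)" for s
      using C2 unfolding C2_curve_def by auto
    show "\<gamma> s \<in> Mk k" "\<gamma> s $ 3 > 0" for s
      using inK[of s] KM hemi unfolding Mk_def by auto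
  qed (use unit in simp)
  have support: "line_normal k (\<omega> s) (r s) \<bullet> \<gamma> t \<le> 0" for s t
    using supp inK[of t] unfolding halfplane_eq by auto
  note foot' = foot[rule_format]
  note d\<omega> = support_angle_has_real_derivative[OF om_cont support foot']
  have "deriv \<omega> s * lsq_dtheta (\<gamma> s) (vector_derivative \<gamma> (at s)) = turning s" for s
    unfolding DERIV_imp_deriv[OF d\<omega>] lsq_dtheta_eq turning_def by simp
  moreover have "kappa_g k \<gamma> s * lsq_dtheta (\<gamma> s) (vector_derivative \<gamma> (at s))
      * (1 - k * aa k (x s)) / (1 - k * aa k (r s)) = turning s" for s
    using kappa_g_integrand_eq[OF support foot'] unfolding cosk_def .
  ultimately show ?thesis
    using d\<omega> turning_has_integral[OF per[rule_format]] Lpos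
    by (auto simp: real_differentiable_def)
qed

end
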